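(* $\delta(1)\le 4$; that is, $1\in E_4$: every multiset of four decimal digits can be condensed into $1$.
   Context: For a finite nonempty multiset $S$ of real numbers, $V(S)$ is the smallest set of real numbers such that: (1) if $|S|=1$ then $S\subseteq V(S)$; (2) if $|S|\ge 2$, then for all nonempty multisets $A,B$ with $A+B=S$ (multiplicities add) and all $a\in V(A)$, $b\in V(B)$, each of $a+b,\ a-b,\ b-a,\ ab,\ a/b,\ b/a,\ a^b,\ b^a$ lies in $V(S)$ whenever it is a well-defined real number; (3) if $a\in V(S)$ is a nonnegative integer then $a!\in V(S)$ (with $0!=1$). Let $D=\{0,\dots,9\}$; for $k\ge1$, $E_k$ is the intersection of $V(S)$ over all multisets $S$ of size $k$ with all elements in $D$. For a number $n$, $\delta(n)=\min\{k\ge1: n\in E_k\}$. *)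

theory Defs
  imports Complex_Main "HOL-Library.Multiset"
begin

text \<open>Convention: a > 0 gives a powr b; a = 0 requires b > 0 (value 0); a < 0 requires b to be
  an integer. 0^0 and negative bases with non-integer exponents are treated as undefined.\<close>
definition real_pow_rel :: "real \<Rightarrow> real \<Rightarrow> real \<Rightarrow> bool" where
  "real_pow_rel a b c \<longleftrightarrow>
     (a > 0 \<and> c = a powr b) \<or>
     (a = 0 \<and> b > 0 \<and> c = 0) \<or>
     (a < 0 \<and> b \<in> \<int> \<and> c = a powi \<lfloor>b\<rfloor>)"

definition binop_results :: "real \<Rightarrow> real \<Rightarrow> real set" where
  "binop_results a b =
     {a + b, a - b, b - a, a * b}
     \<union> (if b \<noteq> 0 then {a / b} else {}) \<union> (if a \<noteq> 0 then {b / a} else {})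
     \<union> {c. real_pow_rel a b c} \<union> {c. real_pow_rel b a c}"

inductive V :: "real multiset \<Rightarrow> real \<Rightarrow> bool" where
  single: "V {#x#} x"
| combine: "\<lbrakk>A \<noteq> {#}; B \<noteq> {#}; V A a; V B b; c \<in> binop_results a b\<rbrakk> \<Longrightarrow> V (A + B) c"
| factorial: "\<lbrakk>V S a; a \<in> \<int>; a \<ge> 0\<rbrakk> \<Longrightarrow> V S (fact (nat \<lfloor>a\<rfloor>))"

definition D :: "real set" where
  "D = real ` {0..9}"

definition E :: "nat \<Rightarrow> real set" where
  "E k = {x. \<forall>S. size S = k \<and> set_mset S \<subseteq> D \<longrightarrow> V S x}"

end

theory Submission
  imports Defs
begin

text \<open>Since \<open>1 ^ z = 1\<close> for every real \<open>z\<close>, once some sub-multiset of \<open>S\<close> condenses to \<open>1\<close>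
  the remaining elements can be absorbed one by one. So it suffices that every four digits
  contain either a pair condensing to \<open>1\<close> (equal or consecutive digits, a digit \<open>0\<close> or \<open>1\<close>
  via \<open>0! = 1\<close>, or \<open>{3, 5}\<close>, \<open>{3, 7}\<close> via \<open>3! = 6\<close>) or a triple \<open>x, y, x + y\<close>, which gives
  \<open>(x + y) / (x + y)\<close>. If neither occurs, the sorted digits are at least \<open>2\<close> and pairwise
  two apart, which leaves only \<open>2, 4, 6, _\<close>, \<open>2, _, 7, 9\<close> and \<open>3, 5, _, _\<close>.\<close>

lemma V_nonempty: "V S x \<Longrightarrow> S \<noteq> {#}"
  by (induction rule: V.induct) auto

lemma V_binop: "V A a \<Longrightarrow> V B b \<Longrightarrow> c \<in> binop_results a b \<Longrightarrow> V (A + B) c"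
  using V.combine V_nonempty by blast

lemma V_fact_of_nat: "V S (real n) \<Longrightarrow> V S (fact n)"
  using V.factorial[of S "real n"] by simp

lemma V_add_mset_one: "V A 1 \<Longrightarrow> V (add_mset z A) 1"
proof -
  assume "V A 1"
  moreover have "(1::real) \<in> binop_results 1 z"
    unfolding binop_results_def real_pow_rel_def by auto
  ultimately show ?thesis
    using V_binop V.single by fastforce
qed

lemma V_one_mono:
  assumes "V A 1" and "A \<subseteq># S"
  shows "V S 1"
proof -
  have "V (A + B) 1" for B
    by (induction B) (auto simp: assms(1) intro: V_add_mset_one)
  with assms(2) show ?thesis
    by (metis subset_mset.add_diff_inverse)
qed

lemma V_single_zero_one: "V {#0::real#} 1"
  using V_fact_of_nat[of "{#0#}" 0] V.single[of 0] by simp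

lemma V_pair_of_diff_one:
  assumes "V {#x#} a" and "V {#y#} b" and "a - b = 1"
  shows "V {#x, y#} 1"
proof -
  have "1 \<in> binop_results a b"
    using assms(3) unfolding binop_results_def by auto
  from V_binop[OF assms(1,2) this] show ?thesis
    by (simp add: add_mset_commute)
qed

lemma V_pair_same: "V {#x, x#} 1"
proof (cases "x = 0")
  case True
  then show ?thesis
    using V_add_mset_one[OF V_single_zero_one] by simp
next
  case False
  then have "1 \<in> binop_results x x"
    unfolding binop_results_def by auto
  from V_binop[OF V.single V.single this] show ?thesis
    by simp
qed

lemma V_triple_sum:
  assumes "x + y = z" and "z \<noteq> 0"
  shows "V {#x, y, z#} 1"
proof -
  have "z \<in> binop_results x y"
    using assms(1) unfolding binop_results_def by auto
  then have "V {#x, y#} z"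
    using V_binop[OF V.single V.single] by (fastforce simp: add_mset_commute)
  moreover have "1 \<in> binop_results z z"
    using assms(2) unfolding binop_results_def by auto
  ultimately have "V ({#x, y#} + {#z#}) 1"
    using V_binop V.single by blast
  then show ?thesis
    by (simp add: add_mset_commute)
qed

definition pair_to_one :: "nat \<Rightarrow> nat \<Rightarrow> bool" where
  "pair_to_one x y \<longleftrightarrow> x = y \<or> min x y \<le> 1 \<or> x = y + 1 \<or> y = x + 1
     \<or> {x, y} = {3, 5} \<or> {x, y} = {3, 7}"

lemma V_pair_to_one:
  assumes "pair_to_one x y"
  shows "V {#real x, real y#} 1"
proof -
  have swap: "V {#real x, real y#} 1" if "V {#real y, real x#} 1"
    using that by (simp add: add_mset_commute)
  have small: "V {#real u, real v#} 1" if "u \<le> 1" for u v :: nat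
  proof -
    have "V {#real u#} 1"
      using \<open>u \<le> 1\<close> V_single_zero_one V.single[of 1] by (cases u) auto
    then show ?thesis
      using V_add_mset_one[of "{#real u#}" "real v"] by (simp add: add_mset_commute)
  qed
  have consecutive: "V {#real (u + 1), real u#} 1" for u :: nat
    using V_pair_of_diff_one[OF V.single V.single] by simp
  have fact3: "V {#3::real#} 6"
    using V_fact_of_nat[of "{#3#}" 3] V.single[of 3] by (simp add: fact_numeral)
  have "V {#3::real, 5#} 1" "V {#7::real, 3#} 1"
    using V_pair_of_diff_one[OF fact3 V.single] V_pair_of_diff_one[OF V.single fact3] by simp_all
  then have three_five_seven: "V {#real x, real y#} 1" if "{x, y} = {3, 5} \<or> {x, y} = {3, 7}"
    using that by (auto simp: doubleton_eq_iff add_mset_commute)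
  from assms consider "x = y" | "x \<le> 1" | "y \<le> 1" | "x = y + 1" | "y = x + 1"
    | "{x, y} = {3, 5} \<or> {x, y} = {3, 7}"
    unfolding pair_to_one_def min_le_iff_disj by blast
  then show ?thesis
  proof cases
    case 1
    then show ?thesis using V_pair_same by simp
  next
    case 2
    then show ?thesis using small by blast
  next
    case 3
    then show ?thesis using small swap by blast
  next
    case 4
    then show ?thesis using consecutive by blast
  next
    case 5
    then show ?thesis using consecutive swap by blast
  next
    case 6
    then show ?thesis using three_five_seven by blast
  qed
qed

lemma sorted_digits_cases:
  fixes a b c d :: nat
  assumes "a \<le> b" "b \<le> c" "c \<le> d" "d \<le> 9"
  shows "pair_to_one a b \<or> pair_to_one b c \<or> pair_to_one c d
    \<or> (a + b = c \<and> 0 < c) \<or> (a + c = d \<and> 0 < d)"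
proof -
  have close: "pair_to_one x y" if "x \<le> y" "y \<le> x + 1" for x y :: nat
    using that unfolding pair_to_one_def by (cases "y = x") auto
  consider "a \<le> 1" | "b \<le> a + 1" | "c \<le> b + 1" | "d \<le> c + 1"
    | "a = 2" "b = 4" "c = 6" | "a = 2" "c = 7" "d = 9" | "a = 3" "b = 5"
    using assms by linarith
  then show ?thesis
  proof cases
    case 1
    then have "pair_to_one a b"
      unfolding pair_to_one_def by (simp add: min_le_iff_disj)
    then show ?thesis
      by blast
  next
    case 2
    then show ?thesis
      using close assms(1) by blast
  next
    case 3
    then show ?thesis
      using close assms(2) by blast
  next
    case 4
    then show ?thesis
      using close assms(3) by blast
  next
    case 5
    then show ?thesis
      by simp
  next
    case 6
    then show ?thesis
      by simp
  next
    case 7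
    then have "pair_to_one a b"
      unfolding pair_to_one_def by simp
    then show ?thesis
      by blast
  qed
qed

lemma V_sorted_digits_one:
  fixes a b c d :: nat
  assumes "a \<le> b" "b \<le> c" "c \<le> d" "d \<le> 9"
  shows "V {#real a, real b, real c, real d#} 1"
  using sorted_digits_cases[OF assms]
proof (elim disjE conjE)
  assume "pair_to_one a b"
  from V_one_mono[OF V_pair_to_one[OF this]] show ?thesis by simp
next
  assume "pair_to_one b c"
  from V_one_mono[OF V_pair_to_one[OF this]] show ?thesis by simp
next
  assume "pair_to_one c d"
  from V_one_mono[OF V_pair_to_one[OF this]] show ?thesis by simp
next
  assume "a + b = c" "0 < c"
  from V_one_mono[OF V_triple_sum[of "real a" "real b" "real c"]] show ?thesis
    using \<open>a + b = c\<close> \<open>0 < c\<close> by simp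
next
  assume "a + c = d" "0 < d"
  from V_one_mono[OF V_triple_sum[of "real a" "real c" "real d"]] show ?thesis
    using \<open>a + c = d\<close> \<open>0 < d\<close> by (simp add: add_mset_commute)
qed

lemma size_4_multiset_sorted:
  fixes S :: "'a::linorder multiset"
  assumes "size S = 4"
  obtains w x y z where "S = {#w, x, y, z#}" "w \<le> x" "x \<le> y" "y \<le> z"
proof -
  define xs where "xs = sorted_list_of_multiset S"
  have "length xs = 4"
    using assms by (metis xs_def mset_sorted_list_of_multiset size_mset)
  then obtain w x y z where xs: "xs = [w, x, y, z]"
    by (auto simp: length_Suc_conv numeral_eq_Suc)
  have "sorted xs" "mset xs = S"
    by (simp_all add: xs_def)
  with xs show ?thesis
    using that by auto
qed

theorem lemma5p1:
  shows "(1::real) \<in> E 4"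
  unfolding E_def
proof (intro CollectI allI impI, elim conjE)
  fix S :: "real multiset"
  assume "size S = 4" and digits: "set_mset S \<subseteq> D"
  then obtain w x y z where S: "S = {#w, x, y, z#}" and "w \<le> x" "x \<le> y" "y \<le> z"
    using size_4_multiset_sorted by blast
  have digit: "\<exists>n. u = real n \<and> n \<le> 9" if "u \<in> {w, x, y, z}" for u
    using digits that unfolding S D_def by auto
  obtain a b c d where "w = real a" "x = real b" "y = real c" "z = real d" "d \<le> 9"
    using digit by (metis insertCI)
  with \<open>w \<le> x\<close> \<open>x \<le> y\<close> \<open>y \<le> z\<close> show "V S 1"
    unfolding S using V_sorted_digits_one[of a b c d] by simp
qed

end
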